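(* Let $\mathcal{T}$ be the twisted $N=2$ superconformal algebra (defined in the context), let $\lambda\in\mathbb{C}^*$, $\alpha\in\mathbb{C}$ and $t\in\{1,-1\}$. Let $V=\mathbb{C}[\partial^2]\oplus\partial\mathbb{C}[\partial^2]$ be the $\mathbb{Z}_2$-graded vector space with $V_{\bar0}=\mathbb{C}[\partial^2]$ and $V_{\bar1}=\partial\mathbb{C}[\partial^2]$. For $m\in\mathbb{Z}$, $r\in\frac12+\mathbb{Z}$, $p\in\frac12\mathbb{Z}$ and $f(\partial^2)\in\mathbb{C}[\partial^2]$ define $$L_mf(\partial^2)=\lambda^m(\partial^2+m\alpha)f(\partial^2+m),\qquad L_m\partial f(\partial^2)=\lambda^m\big(\partial^2+m(\alpha+\tfrac12)\big)\partial f(\partial^2+m),$$ $$I_rf(\partial^2)=-2t^{2r}\lambda^{r}\alpha f(\partial^2+r),\qquad I_r\partial f(\partial^2)=t^{2r}\lambda^{r}(1-2\alpha)\partial f(\partial^2+r),$$ $$G_pf(\partial^2)=t^{2p}\lambda^p\partial f(\partial^2+p),\qquad G_p\partial f(\partial^2)=(-t)^{2p}\lambda^p(\partial^2+2p\alpha)f(\partial^2+p).$$ Then these formulas make $V$ a $\mathcal{T}$-module (denoted $\mathcal{M}_t(\lambda,\alpha)$), and as a module over $\mathcal{U}(\mathfrak{h})$, $\mathfrak{h}=\mathbb{C}L_0\oplus\mathbb{C}G_0$, it is free of rank $1$.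
   Context: The twisted $N=2$ superconformal algebra $\mathcal{T}$ is the Lie superalgebra over $\mathbb{C}$ with basis $\{L_m, I_r, G_p\mid m\in\mathbb{Z}, r\in\frac12+\mathbb{Z}, p\in\frac12\mathbb{Z}\}$, even part spanned by the $L_m,I_r$, odd part spanned by the $G_p$, and with the only nonzero brackets $[L_m,L_n]=(m-n)L_{m+n}$, $[L_m,I_r]=-rI_{m+r}$, $[L_m,G_p]=(\frac m2-p)G_{m+p}$, $[I_r,G_p]=G_{r+p}$, and $[G_p,G_q]=(-1)^{2p}2L_{p+q}$ if $p+q\in\mathbb{Z}$, $[G_p,G_q]=(-1)^{2p+1}(p-q)I_{p+q}$ if $p+q\in\frac12+\mathbb{Z}$. A $\mathcal{T}$-module is a $\mathbb{Z}_2$-graded space $V$ with $\mathcal{T}_{\bar i}V_{\bar j}\subseteq V_{\bar i+\bar j}$ and $x(yv)-(-1)^{|x||y|}y(xv)=[x,y]v$. Here $\partial$ is a formal variable, $f(\partial^2+m)$ means the polynomial $f$ evaluated at $\partial^2+m$, and for $p\in\frac12\mathbb{Z}$, $\lambda^p$ means $(\lambda^{1/2})^{2p}$ for a fixed choice of square root $\lambda^{1/2}$. *)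

theory Defs
  imports Complex_Main "HOL-Computational_Algebra.Polynomial"
begin

text \<open>Basis elements: Lb m = L_m (m integer), Ib r = I_r (r in 1/2 + Z),
  Gb p = G_p (p in 1/2 Z).  Indices of I and G are real numbers subject to
  the validity predicate below.\<close>

datatype Tbasis = Lb int | Ib real | Gb real

definition half_int :: "real \<Rightarrow> bool" where
  "half_int r \<longleftrightarrow> r - 1/2 \<in> \<int>"

fun valid :: "Tbasis \<Rightarrow> bool" where
  "valid (Lb m) = True"
| "valid (Ib r) = half_int r"
| "valid (Gb p) = (2 * p \<in> \<int>)"

fun odd_b :: "Tbasis \<Rightarrow> bool" where
  "odd_b (Gb p) = True"
| "odd_b _ = False"

text \<open>For p in 1/2 Z and z a complex number, hpow z p = z^(2p) (an integer power).
  With z = lambda^(1/2) this is lambda^p in the paper's convention.\<close>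
definition hpow :: "complex \<Rightarrow> real \<Rightarrow> complex" where
  "hpow z p = z powi \<lfloor>2 * p\<rfloor>"

text \<open>The Lie superbracket of two basis elements is a scalar multiple of a
  basis element; it is returned as (coefficient, basis element).  The zero
  bracket is represented with coefficient 0.  Brackets not listed in the
  definition of T are obtained by super-antisymmetry
  [y,x] = -(-1)^(|x||y|) [x,y].\<close>
fun tbr :: "Tbasis \<Rightarrow> Tbasis \<Rightarrow> complex \<times> Tbasis" where
  "tbr (Lb m) (Lb n) = (of_int (m - n), Lb (m + n))"
| "tbr (Lb m) (Ib r) = (- of_real r, Ib (of_int m + r))"
| "tbr (Ib r) (Lb m) = (of_real r, Ib (r + of_int m))"
| "tbr (Lb m) (Gb p) = (of_real (of_int m / 2 - p), Gb (of_int m + p))"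
| "tbr (Gb p) (Lb m) = (- of_real (of_int m / 2 - p), Gb (p + of_int m))"
| "tbr (Ib r) (Gb p) = (1, Gb (r + p))"
| "tbr (Gb p) (Ib r) = (-1, Gb (p + r))"
| "tbr (Ib r) (Ib s) = (0, Lb 0)"
| "tbr (Gb p) (Gb q) =
     (if p + q \<in> \<int> then ((-1) powi \<lfloor>2 * p\<rfloor> * 2, Lb \<lfloor>p + q\<rfloor>)
      else ((-1) powi (\<lfloor>2 * p\<rfloor> + 1) * of_real (p - q), Ib (p + q)))"

text \<open>An element (f, g) stands for f(d^2) + d g(d^2); the even part
  V_0 = C[d^2] is {(f,0)}, the odd part V_1 = d C[d^2] is {(0,g)}.\<close>
type_synonym V = "complex poly \<times> complex poly"

definition vadd :: "V \<Rightarrow> V \<Rightarrow> V" where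
  "vadd u w = (fst u + fst w, snd u + snd w)"

definition vsub :: "V \<Rightarrow> V \<Rightarrow> V" where
  "vsub u w = (fst u - fst w, snd u - snd w)"

definition vsc :: "complex \<Rightarrow> V \<Rightarrow> V" where
  "vsc c u = (smult c (fst u), smult c (snd u))"

definition vzero :: V where "vzero = (0, 0)"

definition even_V :: "V \<Rightarrow> bool" where "even_V u \<longleftrightarrow> snd u = 0"
definition odd_V :: "V \<Rightarrow> bool" where "odd_V u \<longleftrightarrow> fst u = 0"

definition shift :: "complex \<Rightarrow> complex poly \<Rightarrow> complex poly" where
  "shift a f = pcompose f [:a, 1:]"

text \<open>A family of operators act x (x a basis element) defines a T-module
  structure on V (by linear extension) iff each operator is linear, respects
  the Z_2-grading, and x(yv) - (-1)^(|x||y|) y(xv) = [x,y]v for all basis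
  elements x, y and all v.\<close>
definition is_T_module :: "(Tbasis \<Rightarrow> V \<Rightarrow> V) \<Rightarrow> bool" where
  "is_T_module act \<longleftrightarrow>
     (\<forall>x. valid x \<longrightarrow>
        (\<forall>u w. act x (vadd u w) = vadd (act x u) (act x w)) \<and>
        (\<forall>c u. act x (vsc c u) = vsc c (act x u)) \<and>
        (\<forall>u. even_V u \<longrightarrow> (if odd_b x then odd_V (act x u) else even_V (act x u))) \<and>
        (\<forall>u. odd_V u \<longrightarrow> (if odd_b x then even_V (act x u) else odd_V (act x u)))) \<and>
     (\<forall>x y v. valid x \<longrightarrow> valid y \<longrightarrow>
        vsub (act x (act y v))
             (vsc (if odd_b x \<and> odd_b y then -1 else 1) (act y (act x v)))
        = vsc (fst (tbr x y)) (act (snd (tbr x y)) v))"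

definition poly_act :: "complex poly \<Rightarrow> (V \<Rightarrow> V) \<Rightarrow> V \<Rightarrow> V" where
  "poly_act a A v = foldr vadd (map (\<lambda>i. vsc (coeff a i) ((A ^^ i) v)) [0..<Suc (degree a)]) vzero"

text \<open>By PBW, U(h) has basis L_0^i, L_0^i G_0 (i >= 0) (note [G_0,G_0] = 2 L_0),
  so every element of U(h) is uniquely a(L_0) + b(L_0) G_0 with polynomials a, b.\<close>
definition free_rank1_Uh :: "(Tbasis \<Rightarrow> V \<Rightarrow> V) \<Rightarrow> bool" where
  "free_rank1_Uh act \<longleftrightarrow>
     (\<exists>v. \<forall>w. \<exists>!ab :: complex poly \<times> complex poly.
         w = vadd (poly_act (fst ab) (act (Lb 0)) v)
                  (poly_act (snd ab) (act (Lb 0)) (act (Gb 0) v)))"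

text \<open>mu is the fixed square root lambda^(1/2); lambda = mu^2.\<close>
fun Mact :: "complex \<Rightarrow> complex \<Rightarrow> complex \<Rightarrow> Tbasis \<Rightarrow> V \<Rightarrow> V" where
  "Mact t mu \<alpha> (Lb m) (f, g) =
     (smult (hpow mu (of_int m)) ([:of_int m * \<alpha>, 1:] * shift (of_int m) f),
      smult (hpow mu (of_int m)) ([:of_int m * (\<alpha> + 1/2), 1:] * shift (of_int m) g))"
| "Mact t mu \<alpha> (Ib r) (f, g) =
     (smult (- 2 * hpow t r * hpow mu r * \<alpha>) (shift (of_real r) f),
      smult (hpow t r * hpow mu r * (1 - 2 * \<alpha>)) (shift (of_real r) g))"
| "Mact t mu \<alpha> (Gb p) (f, g) =
     (smult (hpow (- t) p * hpow mu p) ([:2 * of_real p * \<alpha>, 1:] * shift (of_real p) g),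
      smult (hpow t p * hpow mu p) (shift (of_real p) f))"

end

theory Submission
  imports Defs
begin

(*
  Each defining relation of the twisted N=2 algebra is checked on f(\<partial>^2) + \<partial> g(\<partial>^2) by
  comparing both sides as polynomial functions of \<partial>^2; they are built from shifts f(\<partial>^2 + a).
  The scalars combine because \<lambda>^p = \<mu>^(2p) and t^(2p) satisfy x^(p+q) = x^p x^q, and t^2 = 1
  removes t^(2m) for integral m.  The only sign to track is (-1)^(2p) in G_p G_q + G_q G_p, and
  (-1)^(2p) (-1)^(2q) = 1 exactly when p + q is an integer.
  Freeness: L_0 acts as multiplication by \<partial>^2 and G_0 sends 1 to \<partial>, so
  a(L_0) 1 + b(L_0) G_0 1 = a(\<partial>^2) + \<partial> b(\<partial>^2).
*)

lemma hpow_add: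
  assumes "z \<noteq> 0" and "2 * a \<in> \<int> \<or> 2 * b \<in> \<int>"
  shows "hpow z (a + b) = hpow z a * hpow z b"
proof -
  have "\<lfloor>2 * (a + b)\<rfloor> = \<lfloor>2 * a\<rfloor> + \<lfloor>2 * b\<rfloor>"
    using assms(2) by (simp add: distrib_left floor_add2)
  then show ?thesis using assms(1) by (simp add: hpow_def power_int_add)
qed

lemma hpow_0 [simp]: "hpow z 0 = 1"
  by (simp add: hpow_def)

lemma hpow_1_left [simp]: "hpow 1 p = 1"
  by (simp add: hpow_def)

lemma hpow_of_int [simp]: "hpow z (of_int m) = (z ^ 2) powi m"
proof -
  have "\<lfloor>2 * (of_int m :: real)\<rfloor> = 2 * m"
    by (metis floor_of_int of_int_mult of_int_numeral)
  then show ?thesis by (simp add: hpow_def power_int_mult)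
qed

lemma hpow_minus_one_square [simp]: "hpow (-1) p * hpow (-1) p = 1"
  by (simp add: hpow_def)

lemma minus_one_powi_floor [simp]: "(-1) powi \<lfloor>2 * p\<rfloor> = hpow (-1) p"
  by (simp add: hpow_def)

lemma hpow_minus_one_eq:
  assumes "2 * p \<in> \<int>"
  shows "hpow (-1) p = (if p \<in> \<int> then 1 else -1)"
proof -
  obtain k where k: "2 * p = of_int k" using assms by (metis Ints_cases)
  have "p \<in> \<int> \<longleftrightarrow> even k"
  proof
    assume "p \<in> \<int>"
    then obtain n where "p = of_int n" by (metis Ints_cases)
    then have "k = 2 * n" using k by linarith
    then show "even k" by simp
  next
    assume "even k"
    then show "p \<in> \<int>" using k by (auto elim!: evenE)
  qed
  then show ?thesis using k by (simp add: hpow_def power_int_minus_left)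
qed

lemma hpow_minus_one_half_int:
  assumes "half_int r"
  shows "hpow (-1) r = -1"
proof -
  obtain k where "r - 1/2 = of_int k" using assms unfolding half_int_def by (metis Ints_cases)
  then have "\<lfloor>2 * r\<rfloor> = 2 * k + 1" by linarith
  then show ?thesis by (simp add: hpow_def power_int_minus_left)
qed

lemma hpow_minus_one_sum:
  assumes "2 * p \<in> \<int>" and "2 * q \<in> \<int>"
  shows "hpow (-1) p * hpow (-1) q = (if p + q \<in> \<int> then 1 else -1)"
proof -
  have "2 * (p + q) \<in> \<int>" using assms by (simp add: distrib_left)
  moreover have "hpow (-1) p * hpow (-1) q = hpow (-1) (p + q)"
    using assms by (simp add: hpow_add)
  ultimately show ?thesis by (simp only: hpow_minus_one_eq)
qed

lemma poly_shift [simp]: "poly (shift a f) x = poly f (a + x)"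
  by (simp add: shift_def poly_pcompose)

lemma shift_0 [simp]: "shift 0 f = f"
  by (simp add: shift_def)

lemma shift_0_right [simp]: "shift a 0 = 0"
  by (simp add: shift_def)

lemma Pair_poly_eqI:
  fixes f g f' g' :: "'a::{idom,ring_char_0} poly"
  assumes "\<And>x. poly f x = poly f' x" and "\<And>x. poly g x = poly g' x"
  shows "(f, g) = (f', g')"
  using assms by (simp add: poly_eq_poly_eq_iff[symmetric] fun_eq_iff)

definition supercommutator :: "(Tbasis \<Rightarrow> V \<Rightarrow> V) \<Rightarrow> Tbasis \<Rightarrow> Tbasis \<Rightarrow> V \<Rightarrow> V" where
  "supercommutator act x y v =
     vsub (act x (act y v)) (vsc (if odd_b x \<and> odd_b y then -1 else 1) (act y (act x v)))"

lemma Mact_L_L: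
  assumes "mu \<noteq> 0"
  shows "supercommutator (Mact t mu \<alpha>) (Lb m) (Lb n) (f, g)
    = vsc (of_int (m - n)) (Mact t mu \<alpha> (Lb (m + n)) (f, g))"
  unfolding supercommutator_def vsub_def vsc_def
  by (rule Pair_poly_eqI; simp add: hpow_add assms; simp add: field_simps)

lemma Mact_L_I:
  assumes "mu \<noteq> 0" "t = 1 \<or> t = -1" "half_int r"
  shows "supercommutator (Mact t mu \<alpha>) (Lb m) (Ib r) (f, g)
    = vsc (- of_real r) (Mact t mu \<alpha> (Ib (of_int m + r)) (f, g))"
  unfolding supercommutator_def vsub_def vsc_def
  by (rule Pair_poly_eqI; rule disjE[OF assms(2)];
      simp add: hpow_add hpow_minus_one_half_int assms; simp add: field_simps)

lemma Mact_I_L: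
  assumes "mu \<noteq> 0" "t = 1 \<or> t = -1" "half_int r"
  shows "supercommutator (Mact t mu \<alpha>) (Ib r) (Lb m) (f, g)
    = vsc (of_real r) (Mact t mu \<alpha> (Ib (r + of_int m)) (f, g))"
  unfolding supercommutator_def vsub_def vsc_def
  by (rule Pair_poly_eqI; rule disjE[OF assms(2)];
      simp add: hpow_add hpow_minus_one_half_int assms; simp add: field_simps)

lemma Mact_L_G:
  assumes "mu \<noteq> 0" "t = 1 \<or> t = -1" "2 * p \<in> \<int>"
  shows "supercommutator (Mact t mu \<alpha>) (Lb m) (Gb p) (f, g)
    = vsc (of_real (of_int m / 2 - p)) (Mact t mu \<alpha> (Gb (of_int m + p)) (f, g))"
  unfolding supercommutator_def vsub_def vsc_def
  by (rule Pair_poly_eqI; rule disjE[OF assms(2)];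
      simp add: hpow_add assms; simp add: field_simps)

lemma Mact_G_L:
  assumes "mu \<noteq> 0" "t = 1 \<or> t = -1" "2 * p \<in> \<int>"
  shows "supercommutator (Mact t mu \<alpha>) (Gb p) (Lb m) (f, g)
    = vsc (- of_real (of_int m / 2 - p)) (Mact t mu \<alpha> (Gb (p + of_int m)) (f, g))"
  unfolding supercommutator_def vsub_def vsc_def
  by (rule Pair_poly_eqI; rule disjE[OF assms(2)];
      simp add: hpow_add assms; simp add: field_simps)

lemma Mact_I_I:
  assumes "mu \<noteq> 0" "t = 1 \<or> t = -1" "half_int r" "half_int s"
  shows "supercommutator (Mact t mu \<alpha>) (Ib r) (Ib s) (f, g)
    = vsc 0 (Mact t mu \<alpha> (Lb 0) (f, g))"
  unfolding supercommutator_def vsub_def vsc_def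
  by (rule Pair_poly_eqI; rule disjE[OF assms(2)];
      simp add: hpow_add assms; simp add: field_simps)

lemma Mact_I_G:
  assumes "mu \<noteq> 0" "t = 1 \<or> t = -1" "half_int r" "2 * p \<in> \<int>"
  shows "supercommutator (Mact t mu \<alpha>) (Ib r) (Gb p) (f, g)
    = vsc 1 (Mact t mu \<alpha> (Gb (r + p)) (f, g))"
  unfolding supercommutator_def vsub_def vsc_def
  by (rule Pair_poly_eqI; rule disjE[OF assms(2)];
      simp add: hpow_add hpow_minus_one_half_int assms; simp add: field_simps)

lemma Mact_G_I:
  assumes "mu \<noteq> 0" "t = 1 \<or> t = -1" "2 * p \<in> \<int>" "half_int r"
  shows "supercommutator (Mact t mu \<alpha>) (Gb p) (Ib r) (f, g)
    = vsc (-1) (Mact t mu \<alpha> (Gb (p + r)) (f, g))"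
  unfolding supercommutator_def vsub_def vsc_def
  by (rule Pair_poly_eqI; rule disjE[OF assms(2)];
      simp add: hpow_add hpow_minus_one_half_int assms; simp add: field_simps)

lemma Mact_G_G_int:
  assumes "mu \<noteq> 0" "t = 1 \<or> t = -1" "2 * p \<in> \<int>" "2 * q \<in> \<int>" "p + q \<in> \<int>"
  shows "supercommutator (Mact t mu \<alpha>) (Gb p) (Gb q) (f, g)
    = vsc (hpow (-1) p * 2) (Mact t mu \<alpha> (Lb \<lfloor>p + q\<rfloor>) (f, g))"
proof -
  have sign: "hpow (-1) q = hpow (-1) p"
    using hpow_minus_one_sum[OF assms(3,4)] assms(5)
    by (metis hpow_minus_one_square mult.assoc mult_1_right)
  have floor_eq: "of_int \<lfloor>p + q\<rfloor> = p + q" using assms(5) by (rule of_int_floor)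
  then have index: "complex_of_int \<lfloor>p + q\<rfloor> = of_real p + of_real q"
    by (metis of_real_add of_real_of_int_eq)
  have scale: "(mu ^ 2) powi \<lfloor>p + q\<rfloor> = hpow mu p * hpow mu q"
    by (metis floor_eq assms(1,3) hpow_add hpow_of_int)
  show ?thesis
    unfolding supercommutator_def vsub_def vsc_def
    by (rule Pair_poly_eqI; rule disjE[OF assms(2)];
        simp add: hpow_add assms sign index scale; simp add: field_simps)
qed

lemma Mact_G_G_half_int:
  assumes "mu \<noteq> 0" "t = 1 \<or> t = -1" "2 * p \<in> \<int>" "2 * q \<in> \<int>" "p + q \<notin> \<int>"
  shows "supercommutator (Mact t mu \<alpha>) (Gb p) (Gb q) (f, g)
    = vsc (- hpow (-1) p * of_real (p - q)) (Mact t mu \<alpha> (Ib (p + q)) (f, g))"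
proof -
  have sign: "hpow (-1) q = - hpow (-1) p"
    using hpow_minus_one_sum[OF assms(3,4)] assms(5)
    by (metis hpow_minus_one_square mult.assoc mult_1_right mult_minus1_right)
  show ?thesis
    unfolding supercommutator_def vsub_def vsc_def
    by (rule Pair_poly_eqI; rule disjE[OF assms(2)];
        simp add: hpow_add assms sign; simp add: field_simps)
qed

lemma Mact_supercommutator:
  assumes "mu \<noteq> 0" "t = 1 \<or> t = -1" "valid x" "valid y"
  shows "supercommutator (Mact t mu \<alpha>) x y v
    = vsc (fst (tbr x y)) (Mact t mu \<alpha> (snd (tbr x y)) v)"
proof -
  obtain f g where v: "v = (f, g)" by fastforce
  show ?thesis using assms unfolding v
    by (cases x; cases y)
      (simp_all del: Mact.simps add: power_int_add Mact_L_L Mact_L_I Mact_I_L Mact_L_G Mact_G_L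
        Mact_I_I Mact_I_G Mact_G_I Mact_G_G_int Mact_G_G_half_int)
qed

lemma Mact_vadd: "Mact t mu \<alpha> x (vadd u w) = vadd (Mact t mu \<alpha> x u) (Mact t mu \<alpha> x w)"
  by (cases u; cases w; cases x)
    (simp_all add: vadd_def shift_def pcompose_add smult_add_right distrib_left)

lemma Mact_vsc: "Mact t mu \<alpha> x (vsc c u) = vsc c (Mact t mu \<alpha> x u)"
  by (cases u; cases x) (simp_all add: vsc_def shift_def pcompose_smult smult_add_right mult_ac)

lemma Mact_even:
  "even_V u \<Longrightarrow> (if odd_b x then odd_V (Mact t mu \<alpha> x u) else even_V (Mact t mu \<alpha> x u))"
  by (cases u; cases x) (simp_all add: even_V_def odd_V_def)

lemma Mact_odd:
  "odd_V u \<Longrightarrow> (if odd_b x then even_V (Mact t mu \<alpha> x u) else odd_V (Mact t mu \<alpha> x u))"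
  by (cases u; cases x) (simp_all add: even_V_def odd_V_def)

lemma Mact_L0_funpow:
  "(Mact t mu \<alpha> (Lb 0) ^^ i) (f, g) = ([:0, 1:] ^ i * f, [:0, 1:] ^ i * g)"
  by (induction i) (simp_all add: mult.assoc)

lemma foldr_vadd_map:
  "foldr vadd (map h xs) vzero = (\<Sum>x\<leftarrow>xs. fst (h x), \<Sum>x\<leftarrow>xs. snd (h x))"
  by (induction xs) (simp_all add: vadd_def vzero_def)

lemma sum_list_smult_coeff_power:
  "(\<Sum>i\<leftarrow>[0..<Suc (degree a)]. smult (coeff a i) ([:0, 1:] ^ i * h)) = a * h"
proof -
  have "(\<Sum>i\<leftarrow>[0..<Suc (degree a)]. smult (coeff a i) ([:0, 1:] ^ i * h))
      = (\<Sum>i\<le>degree a. monom (coeff a i) i) * h"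
    by (simp del: upt_Suc
        add: interv_sum_list_conv_sum_set_nat atLeast0AtMost atLeastLessThanSuc_atLeastAtMost
        sum_distrib_right monom_altdef)
  also have "\<dots> = a * h" by (simp add: poly_as_sum_of_monoms)
  finally show ?thesis .
qed

lemma poly_act_Mact_L0: "poly_act a (Mact t mu \<alpha> (Lb 0)) (f, g) = (a * f, a * g)"
  unfolding poly_act_def foldr_vadd_map
  by (simp only: Mact_L0_funpow vsc_def fst_conv snd_conv sum_list_smult_coeff_power)

lemma free_rank1_Uh_Mact: "free_rank1_Uh (Mact t mu \<alpha>)"
  unfolding free_rank1_Uh_def
proof (intro exI allI)
  fix w :: V
  have "Mact t mu \<alpha> (Gb 0) (1, 0) = (0, 1)" by simp
  then show "\<exists>!ab. w = vadd (poly_act (fst ab) (Mact t mu \<alpha> (Lb 0)) (1, 0))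
                   (poly_act (snd ab) (Mact t mu \<alpha> (Lb 0)) (Mact t mu \<alpha> (Gb 0) (1, 0)))"
    by (simp add: poly_act_Mact_L0 vadd_def)
qed

theorem proposition2p3:
  fixes lam mu \<alpha> t :: complex
  assumes "lam \<noteq> 0" and "mu ^ 2 = lam" and "t = 1 \<or> t = -1"
  shows "is_T_module (Mact t mu \<alpha>) \<and> free_rank1_Uh (Mact t mu \<alpha>)"
proof -
  have "mu \<noteq> 0" using assms(1,2) by auto
  then have "is_T_module (Mact t mu \<alpha>)"
    unfolding is_T_module_def
    using Mact_vadd Mact_vsc Mact_even Mact_odd Mact_supercommutator[OF _ assms(3)]
    by (simp add: supercommutator_def)
  then show ?thesis using free_rank1_Uh_Mact by blast
qed

end
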